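(* Let $m,p>-1$ be real and $k\in\mathbb{C}$ with $\operatorname{Re}k>-2$. Then $$\int_{0}^{1}\frac{\log^{k+1}(x)\,(x^m-x^p)}{(x^{m+1}+1)(x^{p+1}+1)}\,dx=-2^{-k-1}\left(2^{k+1}-1\right)e^{\frac{i\pi k}{2}}\,\zeta(k+2)\,\Gamma(k+2)\left(\frac{\left(\frac{i}{m+1}\right)^k}{(m+1)^2}-\frac{\left(\frac{i}{p+1}\right)^k}{(p+1)^2}\right).$$
   Context: For $x\in(0,1)$, $\log^{s}(x)=e^{s\log(\log x)}$ with $\log(\log x)=\log|\log x|+i\pi$; all powers are principal, so $\left(\frac{i}{q}\right)^k=e^{i\pi k/2}q^{-k}$ for $q>0$. $\zeta$ is the Riemann zeta function. *)

theory Defs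
  imports "HOL-Analysis.Analysis"
begin

text \<open>For Re s > 1 it is the Dirichlet series; for
  0 < Re s \<le> 1, s \<noteq> 1, it is given by the standard analytic continuation
  zeta s = s/(s-1) - s * integral from 1 to infinity of frac(x) x^(-s-1) dx
  (Titchmarsh, eq. 2.1.5). Only values with Re s > 0 are used below.\<close>
definition zeta :: "complex \<Rightarrow> complex" where
  "zeta s = (if Re s > 1 then (\<Sum>n. 1 / (of_nat (Suc n)) powr s)
             else s / (s - 1) - s * integral {1..}
                    (\<lambda>x::real. of_real (frac x) * (of_real x) powr (- s - 1)))"

end

theory Submission
  imports Defs
begin

text \<open>
  For 0 < x < 1 the principal power gives (ln x) powr (k + 1) = e^(i pi (k + 1)) (-ln x) powr (k + 1),
  and the rational factor splits as x^m / (x^(m+1) + 1) - x^p / (x^(p+1) + 1).  With s = k + 2 and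
  a = c + 1 each piece is an integral of (-ln x)^(s-1) x^(a-1) / (1 + x^a).  Expanding 1 / (1 + y) as
  an alternating geometric series, whose even partial sums lie in [0, 1] (so dominated convergence
  applies), and substituting x = e^(-t/b) in each term, which turns it into a Gamma integral, gives
  Gamma(s) a^(-s) times the alternating zeta series, i.e. (1 - 2^(1-s)) zeta(s).  Since Re s may be
  at most 1, that series is summed through the approximants
  sum_(n<N) (n+1)^(-s) - N^(1-s) / (1 - s), which converge to zeta(s) for Re s > 0 by the integral
  representation of zeta in terms of frac x; combined at N and 2N their correction terms cancel.
\<close>

lemma of_real_powr_eq_exp:
  "r > 0 \<Longrightarrow> complex_of_real r powr w = exp (w * of_real (ln r))"
  by (simp add: powr_def Ln_of_real)

lemma exp_neg_div_image:
  assumes "b > 0"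
  shows "(\<lambda>t. exp (- t / b)) ` {0<..} = {0<..<(1::real)}"
proof
  show "(\<lambda>t. exp (- t / b)) ` {0<..} \<subseteq> {0<..<1}"
    using assms by (auto simp: field_simps)
  show "{0<..<1} \<subseteq> (\<lambda>t. exp (- t / b)) ` {0<..}"
  proof
    fix y :: real
    assume y: "y \<in> {0<..<1}"
    then have "y = exp (- (- b * ln y) / b)" and "- b * ln y > 0"
      using assms by (simp_all add: mult_pos_neg ln_less_zero)
    then show "y \<in> (\<lambda>t. exp (- t / b)) ` {0<..}" by blast
  qed
qed

lemma log_moment_substitution:
  fixes b t :: real and z :: complex
  assumes b: "b > 0" and t: "t > 0"
  shows "\<bar>- exp (- t / b) / b\<bar> *\<^sub>R
           (of_real (- ln (exp (- t / b))) powr (z - 1) * of_real (exp (- t / b) powr (b - 1)))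
         = of_real t powr (z - 1) / of_real (exp t) / of_real b powr z"
proof -
  have "\<bar>- exp (- t / b) / b\<bar> * exp (- t / b) powr (b - 1) = exp (- t / b + (b - 1) * (- t / b)) / b"
    using b by (simp add: powr_def flip: exp_add)
  also have "- t / b + (b - 1) * (- t / b) = - t"
    using b by (simp add: field_simps)
  finally have weight: "\<bar>- exp (- t / b) / b\<bar> * exp (- t / b) powr (b - 1) = inverse (exp t) / b"
    by (simp add: exp_minus)
  have "complex_of_real (t / b) powr (z - 1) = exp ((z - 1) * of_real (ln t) - (z - 1) * of_real (ln b))"
    using of_real_powr_eq_exp[of "t / b" "z - 1"] b t by (simp add: ln_div right_diff_distrib)
  also have "\<dots> = of_real t powr (z - 1) * of_real b / of_real b powr z"
    using b t by (simp add: exp_diff of_real_powr_eq_exp[symmetric] powr_diff)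
  finally have power: "complex_of_real (t / b) powr (z - 1) = of_real t powr (z - 1) * of_real b / of_real b powr z" .
  have "\<bar>- exp (- t / b) / b\<bar> *\<^sub>R
           (of_real (- ln (exp (- t / b))) powr (z - 1) * of_real (exp (- t / b) powr (b - 1)))
      = of_real (\<bar>- exp (- t / b) / b\<bar> * exp (- t / b) powr (b - 1)) * of_real (t / b) powr (z - 1)"
    by (simp add: scaleR_conv_of_real)
  also have "\<dots> = of_real (inverse (exp t) / b) * (of_real t powr (z - 1) * of_real b / of_real b powr z)"
    unfolding weight power ..
  finally show ?thesis
    using b by (simp add: field_simps)
qed

lemma log_moment_has_integral:
  fixes b :: real and z :: complex
  assumes b: "b > 0" and z: "Re z > 0"
  defines "f \<equiv> \<lambda>x. of_real (- ln x) powr (z - 1) * of_real (x powr (b - 1))"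
  shows "f absolutely_integrable_on {0<..<1}"
    and "(f has_integral Gamma z / of_real b powr z) {0<..<1}"
proof -
  define g where "g = (\<lambda>t::real. exp (- t / b))"
  define G where "G = (\<lambda>t. of_real t powr (z - 1) / of_real (exp t) / of_real b powr z)"
  have subst: "\<bar>- g t / b\<bar> *\<^sub>R f (g t) = G t" if "t \<in> {0<..}" for t
    using log_moment_substitution[OF b, of t z] that unfolding f_def g_def G_def by simp
  have "G absolutely_integrable_on {0<..}"
    unfolding G_def using absolutely_integrable_Gamma_integral'[OF z] by (rule set_integrable_divide)
  moreover have "(\<lambda>t. \<bar>- g t / b\<bar> *\<^sub>R f (g t)) absolutely_integrable_on {0<..}
      \<longleftrightarrow> G absolutely_integrable_on {0<..}"
    using subst by (intro set_integrable_cong) auto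
  ultimately have "(\<lambda>t. \<bar>- g t / b\<bar> *\<^sub>R f (g t)) absolutely_integrable_on {0<..}"
    by blast
  moreover have "integral {0<..} (\<lambda>t. \<bar>- g t / b\<bar> *\<^sub>R f (g t)) = integral {0<..} G"
    using subst by (rule integral_cong)
  moreover have "integral {0<..} G = Gamma z / of_real b powr z"
    unfolding G_def using Gamma_integral_complex'[OF z] by (intro integral_unique has_integral_divide)
  ultimately have substituted:
      "(\<lambda>t. \<bar>- g t / b\<bar> *\<^sub>R f (g t)) absolutely_integrable_on {0<..}
       \<and> integral {0<..} (\<lambda>t. \<bar>- g t / b\<bar> *\<^sub>R f (g t)) = Gamma z / of_real b powr z"
    by simp
  have der: "(g has_field_derivative - g t / b) (at t within {0<..})" for t
    unfolding g_def using b by (auto intro!: derivative_eq_intros)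
  have inj: "inj_on g {0<..}"
    unfolding g_def using b by (auto simp: inj_on_def)
  have "f absolutely_integrable_on g ` {0<..} \<and> integral (g ` {0<..}) f = Gamma z / of_real b powr z"
    using substituted by (intro has_absolute_integral_change_of_variables_real[OF _ der inj, THEN iffD1]) auto
  then have abs: "f absolutely_integrable_on {0<..<1}" and val: "integral {0<..<1} f = Gamma z / of_real b powr z"
    unfolding g_def exp_neg_div_image[OF b] by auto
  from abs show "f absolutely_integrable_on {0<..<1}" .
  from abs have "f integrable_on {0<..<1}"
    by (rule set_lebesgue_integral_eq_integral(1))
  then show "(f has_integral Gamma z / of_real b powr z) {0<..<1}"
    unfolding val[symmetric] by (rule integrable_integral)
qed

lemma tendsto_integral_atLeastAtMost_nat:
  fixes f :: "real \<Rightarrow> 'a::euclidean_space"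
  assumes f: "\<And>N::nat. f integrable_on {a..real N}"
    and h: "h integrable_on {a..}"
    and bound: "\<And>x. x \<ge> a \<Longrightarrow> norm (f x) \<le> h x"
  shows "(\<lambda>N. integral {a..real N} f) \<longlonglongrightarrow> integral {a..} f"
proof -
  define f_upto where "f_upto = (\<lambda>N::nat. \<lambda>x. if x \<in> {..real N} then f x else 0)"
  have "{..real N} \<inter> {a..} = {a..real N}" for N
    by auto
  then have f_upto: "(f_upto N has_integral integral {a..real N} f) {a..}" for N
    unfolding f_upto_def has_integral_restrict_Int using f by (simp add: integrable_integral)
  have "norm (f_upto N x) \<le> h x" if "x \<in> {a..}" for N x
  proof -
    have "0 \<le> h x"
      using bound[of x] norm_ge_zero[of "f x"] that by (meson atLeast_iff order.trans)
    then show ?thesis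
      using bound[of x] that unfolding f_upto_def by auto
  qed
  moreover have "(\<lambda>N. f_upto N x) \<longlonglongrightarrow> f x" for x
  proof (rule tendsto_eventually)
    show "eventually (\<lambda>N. f_upto N x = f x) sequentially"
      using eventually_ge_at_top[of "nat \<lceil>x\<rceil>"]
      by eventually_elim (auto simp: f_upto_def intro: order.trans[OF le_of_int_ceiling])
  qed
  ultimately have "(\<lambda>N. integral {a..} (f_upto N)) \<longlonglongrightarrow> integral {a..} f"
    using f_upto h by (intro dominated_convergence(2)) blast+
  then show ?thesis
    unfolding integral_unique[OF f_upto] .
qed

definition zeta_approx :: "complex \<Rightarrow> nat \<Rightarrow> complex" where
  "zeta_approx s N = (\<Sum>n<N. 1 / of_nat (Suc n) powr s) - of_nat N powr (1 - s) / (1 - s)"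

lemma powr_one_minus: "(z :: complex) powr (1 - s) = z * z powr (- s)"
  using powr_add[of z 1 "- s"] by simp

lemma zeta_approx_diff:
  assumes "s \<noteq> 0" "s \<noteq> 1"
  shows "(zeta_approx s N - zeta_approx s (Suc N)) / s
       = (of_nat (Suc N) powr (1 - s) / (1 - s) + of_nat N * of_nat (Suc N) powr (- s) / s)
         - (of_nat N powr (1 - s) / (1 - s) + of_nat N * of_nat N powr (- s) / s)"
proof -
  define A where "A = of_nat (Suc N) powr (- s)"
  define B where "B = of_nat N powr (- s)"
  have "zeta_approx s N - zeta_approx s (Suc N) = - A + (of_nat (Suc N) * A - of_nat N * B) / (1 - s)"
    unfolding zeta_approx_def A_def B_def powr_one_minus
    by (simp add: powr_minus divide_inverse algebra_simps)
  also have "(\<dots>) / s = (of_nat (Suc N) * A / (1 - s) + of_nat N * A / s) - (of_nat N * B / (1 - s) + of_nat N * B / s)"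
    using assms by (simp add: divide_simps) (simp add: algebra_simps)
  finally show ?thesis
    unfolding powr_one_minus A_def B_def .
qed

lemma frac_powr_integral_step:
  fixes s :: complex
  assumes s: "Re s > 0" "s \<noteq> 1" and N: "N \<ge> 1"
  shows "((\<lambda>x. of_real (frac x) * of_real x powr (- s - 1)) has_integral
           (zeta_approx s N - zeta_approx s (Suc N)) / s) {real N..real (Suc N)}"
proof -
  have s0: "s \<noteq> 0" and s1: "1 - s \<noteq> 0"
    using s by auto
  define G where "G = (\<lambda>x::real. of_real x powr (1 - s) / (1 - s) + of_nat N * of_real x powr (- s) / s)"
  have "((\<lambda>x. of_real (x - real N) * of_real x powr (- s - 1)) has_integral G (real (Suc N)) - G (real N))
          {real N..real (Suc N)}"
  proof (rule fundamental_theorem_of_calculus_interior)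
    show "continuous_on {real N..real (Suc N)} G"
      unfolding G_def using N s0 s1 by (intro continuous_intros) auto
    fix x
    assume "x \<in> {real N<..<real (Suc N)}"
    then have x: "x > 0"
      using N by auto
    have "(G has_vector_derivative
            (1 - s) * of_real x powr (1 - s - 1) / (1 - s) + of_nat N * (- s * of_real x powr (- s - 1)) / s) (at x)"
      unfolding G_def using x by (auto intro!: derivative_eq_intros has_vector_derivative_real_field)
    also have "(1 - s) * of_real x powr (1 - s - 1) / (1 - s) + of_nat N * (- s * of_real x powr (- s - 1)) / s
             = of_real (x - real N) * of_real x powr (- s - 1)"
      using x s0 s1 by (simp add: powr_diff field_simps)
    finally show "(G has_vector_derivative of_real (x - real N) * of_real x powr (- s - 1)) (at x)" .
  qed simp
  also have "G (real (Suc N)) - G (real N) = (zeta_approx s N - zeta_approx s (Suc N)) / s"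
    unfolding G_def zeta_approx_diff[OF s0 s(2)] of_real_of_nat_eq ..
  finally show ?thesis
  proof (rule has_integral_spike_finite[of "{real (Suc N)}", rotated 2])
    fix x
    assume "x \<in> {real N..real (Suc N)} - {real (Suc N)}"
    then have "\<lfloor>x\<rfloor> = int N"
      by (intro floor_unique) auto
    then show "of_real (frac x) * of_real x powr (- s - 1) = of_real (x - real N) * of_real x powr (- s - 1)"
      by (simp add: frac_def)
  qed simp
qed

lemma frac_powr_integral_upto:
  fixes s :: complex
  assumes s: "Re s > 0" "s \<noteq> 1" and N: "N \<ge> 1"
  shows "((\<lambda>x. of_real (frac x) * of_real x powr (- s - 1)) has_integral
           (s / (s - 1) - zeta_approx s N) / s) {1..real N}"
  using N
proof (induction N rule: nat_induct_at_least)
  case base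
  have "zeta_approx s 1 = s / (s - 1)"
    using s by (simp add: zeta_approx_def field_simps)
  then show ?case
    by (simp add: has_integral_refl)
next
  case (Suc N)
  have "((\<lambda>x. of_real (frac x) * of_real x powr (- s - 1)) has_integral
          (s / (s - 1) - zeta_approx s N) / s + (zeta_approx s N - zeta_approx s (Suc N)) / s) {1..real (Suc N)}"
    using Suc by (intro has_integral_combine[OF _ _ Suc.IH frac_powr_integral_step[OF s Suc.hyps]]) auto
  then show ?case
    by (simp add: diff_divide_distrib)
qed

lemma zeta_approx_tendsto_frac_powr_integral:
  fixes s :: complex
  assumes s: "Re s > 0" "s \<noteq> 1"
  shows "zeta_approx s \<longlonglongrightarrow>
           s / (s - 1) - s * integral {1..} (\<lambda>x. of_real (frac x) * of_real x powr (- s - 1))"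
proof -
  define g where "g = (\<lambda>x::real. of_real (frac x) * of_real x powr (- s - 1))"
  have "g integrable_on {1..real N}" for N
  proof (cases "N \<ge> 1")
    case True
    then show ?thesis
      unfolding g_def using frac_powr_integral_upto[OF s] by blast
  qed (simp add: integrable_on_empty)
  moreover have "(\<lambda>x. x powr (- Re s - 1)) integrable_on {1..}"
    using has_integral_powr_to_inf[of "- Re s - 1" 1] s by auto
  moreover have "norm (g x) \<le> x powr (- Re s - 1)" if "x \<ge> 1" for x
  proof -
    have "norm (g x) = frac x * x powr (- Re s - 1)"
      unfolding g_def using that by (simp add: norm_mult norm_powr_real_powr frac_ge_0)
    also have "\<dots> \<le> x powr (- Re s - 1)"
      using frac_lt_1[of x] by (intro mult_left_le_one_le) (auto simp: frac_ge_0)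
    finally show ?thesis .
  qed
  ultimately have "(\<lambda>N. s / (s - 1) - s * integral {1..real N} g) \<longlonglongrightarrow> s / (s - 1) - s * integral {1..} g"
    by (intro tendsto_intros tendsto_integral_atLeastAtMost_nat)
  moreover have "eventually (\<lambda>N. s / (s - 1) - s * integral {1..real N} g = zeta_approx s N) sequentially"
    using eventually_ge_at_top[of 1]
  proof eventually_elim
    case (elim N)
    have "s \<noteq> 0"
      using s by auto
    then show ?case
      using integral_unique[OF frac_powr_integral_upto[OF s elim]] unfolding g_def by simp
  qed
  ultimately show ?thesis
    unfolding g_def by (rule Lim_transform_eventually)
qed

lemma zeta_eq_frac_powr_integral:
  fixes s :: complex
  assumes s: "Re s > 0" "s \<noteq> 1"
  shows "zeta s = s / (s - 1) - s * integral {1..} (\<lambda>x. of_real (frac x) * of_real x powr (- s - 1))"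
proof (cases "Re s > 1")
  case True
  have "(\<lambda>N. of_nat N powr (1 - s) / (1 - s)) \<longlonglongrightarrow> 0"
  proof -
    have "(\<lambda>N. norm (of_nat N powr (1 - s) :: complex)) \<longlonglongrightarrow> 0"
      using True by (simp add: norm_powr_real_powr tendsto_neg_powr filterlim_real_sequentially)
    then show ?thesis
      by (intro tendsto_divide_zero) (simp add: tendsto_norm_zero_iff)
  qed
  from tendsto_add[OF zeta_approx_tendsto_frac_powr_integral[OF s] this]
  have "(\<lambda>n. 1 / of_nat (Suc n) powr s) sums
          (s / (s - 1) - s * integral {1..} (\<lambda>x. of_real (frac x) * of_real x powr (- s - 1)))"
    unfolding sums_def zeta_approx_def by simp
  with True show ?thesis
    unfolding zeta_def by (simp add: sums_iff)
qed (simp add: zeta_def)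

lemma zeta_approx_tendsto:
  "Re s > 0 \<Longrightarrow> s \<noteq> 1 \<Longrightarrow> zeta_approx s \<longlonglongrightarrow> zeta s"
  using zeta_approx_tendsto_frac_powr_integral zeta_eq_frac_powr_integral by simp

lemma alternating_zeta_sum_eq:
  fixes s :: complex
  shows "(\<Sum>n<2 * N. (-1) ^ n / of_nat (Suc n) powr s)
       = (\<Sum>n<2 * N. 1 / of_nat (Suc n) powr s) - 2 powr (1 - s) * (\<Sum>n<N. 1 / of_nat (Suc n) powr s)"
proof (induction N)
  case (Suc N)
  have "of_nat (Suc (Suc (2 * N))) powr s = (2 :: complex) powr s * of_nat (Suc N) powr s"
    using powr_times_real[of 2 "of_nat (Suc N)" s] by simp
  then have "1 / of_nat (Suc (Suc (2 * N))) powr s = 2 powr (1 - s) / 2 * (1 / of_nat (Suc N) powr s)"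
    by (simp add: powr_diff)
  with Suc.IH show ?case
    by (simp add: algebra_simps)
qed simp

lemma alternating_zeta_tendsto:
  fixes s :: complex
  assumes s: "Re s > 0" "s \<noteq> 1"
  shows "(\<lambda>N. \<Sum>n<2 * N. (-1) ^ n / of_nat (Suc n) powr s) \<longlonglongrightarrow> (1 - 2 powr (1 - s)) * zeta s"
proof -
  have "(\<lambda>N. zeta_approx s (2 * N)) \<longlonglongrightarrow> zeta s"
    using LIMSEQ_subseq_LIMSEQ[OF zeta_approx_tendsto[OF s], of "\<lambda>N. 2 * N"]
    by (simp add: strict_mono_def o_def)
  then have "(\<lambda>N. zeta_approx s (2 * N) - 2 powr (1 - s) * zeta_approx s N)
               \<longlonglongrightarrow> zeta s - 2 powr (1 - s) * zeta s"
    by (intro tendsto_intros zeta_approx_tendsto s)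
  moreover have "zeta_approx s (2 * N) - 2 powr (1 - s) * zeta_approx s N
      = (\<Sum>n<2 * N. (-1) ^ n / of_nat (Suc n) powr s)" for N
  proof -
    have "of_nat (2 * N) powr (1 - s) = (2 :: complex) powr (1 - s) * of_nat N powr (1 - s)"
      using powr_times_real[of 2 "of_nat N" "1 - s"] by simp
    then show ?thesis
      unfolding zeta_approx_def alternating_zeta_sum_eq by (simp add: algebra_simps)
  qed
  ultimately show ?thesis
    by (simp add: algebra_simps)
qed

lemma sum_alternating_geometric_even:
  fixes y :: real
  assumes "y \<ge> 0"
  shows "(\<Sum>j<2 * N. (- y) ^ j) = (1 - y ^ (2 * N)) / (1 + y)"
  using assms sum_gp_strict[of "- y" "2 * N"] by (simp add: power_mult)

lemma sum_alternating_geometric_even_bounds: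
  fixes y :: real
  assumes "0 \<le> y" "y \<le> 1"
  shows "\<bar>\<Sum>j<2 * N. (- y) ^ j\<bar> \<le> 1"
proof -
  have "0 \<le> y ^ (2 * N)" "y ^ (2 * N) \<le> 1"
    using assms by (simp_all add: power_le_one)
  then have "0 \<le> 1 - y ^ (2 * N)" "1 - y ^ (2 * N) \<le> 1 + y" "0 < 1 + y"
    using assms by linarith+
  then show ?thesis
    unfolding sum_alternating_geometric_even[OF assms(1)]
    by (simp add: abs_of_nonneg divide_le_eq_1)
qed

lemma sum_alternating_geometric_even_tendsto:
  fixes y :: real
  assumes "0 \<le> y" "y < 1"
  shows "(\<lambda>N. \<Sum>j<2 * N. (- y) ^ j) \<longlonglongrightarrow> 1 / (1 + y)"
proof -
  have "(\<lambda>N. (1 - (y ^ 2) ^ N) / (1 + y)) \<longlonglongrightarrow> (1 - 0) / (1 + y)"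
    using assms by (intro tendsto_intros LIMSEQ_power_zero) (auto simp: abs_square_less_1)
  then show ?thesis
    unfolding sum_alternating_geometric_even[OF assms(1)] by (simp add: power_mult)
qed

lemma log_moment_geometric_has_integral:
  fixes a :: real and s :: complex
  assumes a: "a > 0" and s: "Re s > 0"
  shows "((\<lambda>x. of_real (- ln x) powr (s - 1) * of_real (x powr (a - 1) * (\<Sum>j<n. (- (x powr a)) ^ j)))
           has_integral (\<Sum>j<n. (-1) ^ j * (Gamma s / of_real a powr s / of_nat (Suc j) powr s))) {0<..<1}"
proof -
  have summand: "((\<lambda>x. (-1) ^ j * (of_real (- ln x) powr (s - 1) * of_real (x powr (a * real (Suc j) - 1))))
      has_integral (-1) ^ j * (Gamma s / of_real a powr s / of_nat (Suc j) powr s)) {0<..<1}" for j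
  proof -
    have "a * real (Suc j) > 0" using a by simp
    from log_moment_has_integral(2)[OF this s] have
      "((\<lambda>x. of_real (- ln x) powr (s - 1) * of_real (x powr (a * real (Suc j) - 1)))
          has_integral Gamma s / of_real (a * real (Suc j)) powr s) {0<..<1}" .
    moreover have "complex_of_real (a * real (Suc j)) powr s = of_real a powr s * of_nat (Suc j) powr s"
      using powr_times_real[of "of_real a" "of_nat (Suc j)" s] a by simp
    ultimately show ?thesis
      by (intro has_integral_mult_right) (simp add: divide_divide_eq_left)
  qed
  have "x powr (a - 1) * (- (x powr a)) ^ j = (-1) ^ j * x powr (a * real (Suc j) - 1)" if "x > 0" for x j
  proof -
    have "a * real (Suc j) - 1 = a * real j + (a - 1)"
      by (simp add: algebra_simps)
    then have "x powr (a * real (Suc j) - 1) = x powr (a * real j) * x powr (a - 1)"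
      by (simp only: powr_add)
    also have "x powr (a * real j) = (x powr a) ^ j"
      using that by (simp add: powr_powr[symmetric] powr_realpow)
    finally show ?thesis
      by (simp add: power_minus[of "x powr a"] mult_ac)
  qed
  then have "(\<Sum>j<n. (-1) ^ j * (of_real (- ln x) powr (s - 1) * of_real (x powr (a * real (Suc j) - 1))))
      = of_real (- ln x) powr (s - 1) * of_real (x powr (a - 1) * (\<Sum>j<n. (- (x powr a)) ^ j))"
    if "x \<in> {0<..<1}" for x
    using that by (simp add: sum_distrib_left mult_ac)
  then show ?thesis
    by (rule has_integral_eq[OF _ has_integral_sum[OF _ summand]]) simp_all
qed

lemma log_moment_over_one_plus_has_integral:
  fixes a :: real and s :: complex
  assumes a: "a > 0" and s: "Re s > 0" "s \<noteq> 1"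
  shows "((\<lambda>x. of_real (- ln x) powr (s - 1) * of_real (x powr (a - 1) / (x powr a + 1)))
           has_integral Gamma s / of_real a powr s * ((1 - 2 powr (1 - s)) * zeta s)) {0<..<1}"
proof -
  define P where "P = (\<lambda>x::real. complex_of_real (- ln x) powr (s - 1) * of_real (x powr (a - 1)))"
  define F where "F = (\<lambda>x. P x * of_real (1 / (x powr a + 1)))"
  define S where "S = (\<lambda>N x. P x * of_real (\<Sum>j<2 * N. (- (x powr a)) ^ j))"
  have S_has_integral: "(S N has_integral
      Gamma s / of_real a powr s * (\<Sum>j<2 * N. (-1) ^ j / of_nat (Suc j) powr s)) {0<..<1}" for N
    unfolding S_def P_def using log_moment_geometric_has_integral[OF a s(1), of "2 * N"]
    by (simp add: sum_distrib_left mult_ac)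
  have S_integrable: "S N integrable_on {0<..<1}" for N
    using S_has_integral by blast
  have norm_P_integrable: "(\<lambda>x. norm (P x)) integrable_on {0<..<1}"
    using log_moment_has_integral(1)[OF a s(1)] unfolding P_def absolutely_integrable_on_def by blast
  have power_less_1: "0 \<le> x powr a" "x powr a < 1" if "x \<in> {0<..<1}" for x
    using that a powr_less_mono2[of a x 1] by simp_all
  have bound: "norm (S N x) \<le> norm (P x)" if "x \<in> {0<..<1}" for N x
  proof -
    have "\<bar>\<Sum>j<2 * N. (- (x powr a)) ^ j\<bar> \<le> 1"
      using sum_alternating_geometric_even_bounds power_less_1[OF that] by simp
    then show ?thesis
      unfolding S_def norm_mult norm_of_real by (simp add: mult_left_le)
  qed
  have pointwise: "(\<lambda>N. S N x) \<longlonglongrightarrow> F x" if "x \<in> {0<..<1}" for x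
  proof -
    have "(\<lambda>N. \<Sum>j<2 * N. (- (x powr a)) ^ j) \<longlonglongrightarrow> 1 / (1 + x powr a)"
      using power_less_1[OF that] by (rule sum_alternating_geometric_even_tendsto)
    then have "(\<lambda>N. P x * of_real (\<Sum>j<2 * N. (- (x powr a)) ^ j)) \<longlonglongrightarrow> P x * of_real (1 / (1 + x powr a))"
      by (intro tendsto_mult_left tendsto_of_real)
    then show ?thesis
      unfolding S_def F_def by (simp add: add.commute)
  qed
  note limit = dominated_convergence[OF S_integrable norm_P_integrable bound pointwise]
  have "(\<lambda>N. integral {0<..<1} (S N))
      \<longlonglongrightarrow> Gamma s / of_real a powr s * ((1 - 2 powr (1 - s)) * zeta s)"
    unfolding integral_unique[OF S_has_integral]
    by (rule tendsto_mult_left[OF alternating_zeta_tendsto[OF s]])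
  then have "integral {0<..<1} F = Gamma s / of_real a powr s * ((1 - 2 powr (1 - s)) * zeta s)"
    using limit(2) by (rule LIMSEQ_unique[rotated])
  with integrable_integral[OF limit(1)] show ?thesis
    unfolding F_def P_def by simp
qed

lemma of_real_powr_of_neg:
  fixes r :: real
  assumes "r < 0"
  shows "complex_of_real r powr w = exp (\<i> * of_real pi * w) * of_real (- r) powr w"
proof -
  have "complex_of_real r powr w = exp (w * (of_real (ln (- r)) + of_real pi * \<i>))"
    using assms by (simp add: powr_def Ln_of_real')
  also have "\<dots> = exp (\<i> * of_real pi * w) * exp (w * of_real (ln (- r)))"
    by (simp add: exp_add[symmetric] algebra_simps)
  also have "exp (w * of_real (ln (- r))) = of_real (- r) powr w"
    using assms of_real_powr_eq_exp[of "- r" w] by simp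
  finally show ?thesis .
qed

lemma ii_div_powr:
  fixes a :: real
  assumes "a > 0"
  shows "(\<i> / of_real a) powr k = exp (\<i> * of_real pi * k / 2) / of_real a powr k"
proof -
  have "(\<i> / of_real a) powr k = of_real (1 / a) powr k * \<i> powr k"
    using assms powr_times_real_left[of "of_real (1 / a)" \<i> k] by (simp add: field_simps)
  moreover have "\<i> powr k = exp (\<i> * of_real pi * k / 2)"
    by (simp add: powr_def Ln_ii mult_ac)
  moreover have "complex_of_real (1 / a) powr k = 1 / of_real a powr k"
    using assms of_real_powr_eq_exp[of "1 / a" k] of_real_powr_eq_exp[of a k]
    by (simp add: ln_inverse exp_minus divide_inverse)
  ultimately show ?thesis
    by simp
qed

lemma exp_mult_ii_div_powr_over_square:
  fixes a :: real
  assumes "a > 0"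
  shows "exp (\<i> * of_real pi * k / 2) * ((\<i> / of_real a) powr k / of_real (a ^ 2))
       = exp (\<i> * of_real pi * k) / of_real a powr (k + 2)"
proof -
  have "exp (\<i> * of_real pi * k / 2) * exp (\<i> * of_real pi * k / 2) = exp (\<i> * of_real pi * k)"
    by (simp add: mult_ac flip: exp_add)
  moreover have "complex_of_real a powr (k + 2) = of_real a powr k * of_real (a ^ 2)"
    using assms by (simp add: powr_add)
  ultimately show ?thesis
    unfolding ii_div_powr[OF assms] by (simp add: field_simps)
qed

lemma powr_diff_over_product_split:
  fixes x m p :: real
  assumes "x > 0"
  shows "(x powr m - x powr p) / ((x powr (m + 1) + 1) * (x powr (p + 1) + 1))
       = x powr m / (x powr (m + 1) + 1) - x powr p / (x powr (p + 1) + 1)"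
proof -
  have "x powr (m + 1) + 1 > 0" and "x powr (p + 1) + 1 > 0"
    by (simp_all add: add_nonneg_pos)
  moreover have "x powr m * x powr (p + 1) = x powr p * x powr (m + 1)"
    by (simp add: powr_add)
  ultimately show ?thesis
    by (simp add: field_simps)
qed

lemma closed_form_eq_gamma_eta_difference:
  fixes a b :: real and k :: complex
  assumes a: "a > 0" and b: "b > 0"
  defines "V \<equiv> \<lambda>c::real. Gamma (k + 2) / of_real c powr (k + 2) * ((1 - 2 powr (1 - (k + 2))) * zeta (k + 2))"
  shows "- ((2::complex) powr (- k - 1)) * ((2::complex) powr (k + 1) - 1)
             * exp (\<i> * of_real pi * k / 2) * zeta (k + 2) * Gamma (k + 2)
             * ((\<i> / of_real a) powr k / of_real (a ^ 2) - (\<i> / of_real b) powr k / of_real (b ^ 2))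
         = - exp (\<i> * of_real pi * k) * (V a - V b)"
proof -
  have "(2::complex) powr (- k - 1) * 2 powr (k + 1) = 1"
    by (simp flip: powr_add)
  moreover have "1 - (k + 2) = - k - 1"
    by simp
  ultimately have two: "(2::complex) powr (- k - 1) * (2 powr (k + 1) - 1) = 1 - 2 powr (1 - (k + 2))"
    by (simp only: right_diff_distrib mult_1_right)
  have "exp (\<i> * of_real pi * k / 2) * ((\<i> / of_real a) powr k / of_real (a ^ 2) - (\<i> / of_real b) powr k / of_real (b ^ 2))
      = exp (\<i> * of_real pi * k) / of_real a powr (k + 2) - exp (\<i> * of_real pi * k) / of_real b powr (k + 2)"
    (is "_ = ?D")
    using exp_mult_ii_div_powr_over_square[OF a, of k] exp_mult_ii_div_powr_over_square[OF b, of k]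
    by (simp add: right_diff_distrib)
  then have "- ((2::complex) powr (- k - 1)) * ((2::complex) powr (k + 1) - 1)
             * exp (\<i> * of_real pi * k / 2) * zeta (k + 2) * Gamma (k + 2)
             * ((\<i> / of_real a) powr k / of_real (a ^ 2) - (\<i> / of_real b) powr k / of_real (b ^ 2))
        = - (1 - 2 powr (1 - (k + 2))) * zeta (k + 2) * Gamma (k + 2) * ?D"
    unfolding two[symmetric] by (simp only: mult_minus_left mult_minus_right mult_ac)
  also have "\<dots> = - exp (\<i> * of_real pi * k) * (V a - V b)"
    unfolding V_def using a b by (simp add: field_simps)
  finally show ?thesis .
qed

lemma log_powr_integrand_split:
  fixes x m p :: real and k :: complex
  assumes "0 < x" "x < 1"
  shows "of_real (ln x) powr (k + 1) * of_real (x powr m - x powr p)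
           / of_real ((x powr (m + 1) + 1) * (x powr (p + 1) + 1))
       = - exp (\<i> * of_real pi * k) * (of_real (- ln x) powr (k + 1) * of_real (x powr m / (x powr (m + 1) + 1))
           - of_real (- ln x) powr (k + 1) * of_real (x powr p / (x powr (p + 1) + 1)))"
proof -
  have "of_real (ln x) powr (k + 1) = - exp (\<i> * of_real pi * k) * of_real (- ln x) powr (k + 1)"
    using assms of_real_powr_of_neg[of "ln x" "k + 1"] by (simp add: ln_less_zero distrib_left exp_add)
  moreover have "complex_of_real (x powr m - x powr p) / of_real ((x powr (m + 1) + 1) * (x powr (p + 1) + 1))
      = of_real (x powr m / (x powr (m + 1) + 1)) - of_real (x powr p / (x powr (p + 1) + 1))"
    unfolding of_real_divide[symmetric] of_real_diff[symmetric] powr_diff_over_product_split[OF assms(1)] ..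
  ultimately show ?thesis
    by (simp only: times_divide_eq_right[symmetric] right_diff_distrib mult.assoc)
qed

theorem mainTheorem17:
  fixes m p :: real and k :: complex
  assumes "m > -1" and "p > -1" and "Re k > -2" and "k \<noteq> -1"
  shows "((\<lambda>x::real. (of_real (ln x)) powr (k + 1) * of_real (x powr m - x powr p)
            / of_real ((x powr (m + 1) + 1) * (x powr (p + 1) + 1)))
          has_integral
          (- ((2::complex) powr (- k - 1)) * ((2::complex) powr (k + 1) - 1)
             * exp (\<i> * of_real pi * k / 2) * zeta (k + 2) * Gamma (k + 2)
             * ((\<i> / of_real (m + 1)) powr k / of_real ((m + 1)^2)
                - (\<i> / of_real (p + 1)) powr k / of_real ((p + 1)^2))))
         {0<..<1}"
proof -
  define L where "L = (\<lambda>x::real. complex_of_real (- ln x) powr (k + 1))"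
  define V where "V = (\<lambda>c::real. Gamma (k + 2) / of_real c powr (k + 2) * ((1 - 2 powr (1 - (k + 2))) * zeta (k + 2)))"
  have s: "Re (k + 2) > 0" "k + 2 \<noteq> 1"
    using assms by (auto simp: add_eq_0_iff)
  have "((\<lambda>x. L x * of_real (x powr c / (x powr (c + 1) + 1))) has_integral V (c + 1)) {0<..<1}"
    if "c > -1" for c
    using log_moment_over_one_plus_has_integral[of "c + 1", OF _ s] that
    unfolding L_def V_def by (simp add: add_ac)
  then have integral: "((\<lambda>x. - exp (\<i> * of_real pi * k) * (L x * of_real (x powr m / (x powr (m + 1) + 1))
                 - L x * of_real (x powr p / (x powr (p + 1) + 1))))
              has_integral - exp (\<i> * of_real pi * k) * (V (m + 1) - V (p + 1))) {0<..<1}"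
    using assms by (intro has_integral_mult_right has_integral_diff) auto
  have pos: "m + 1 > 0" "p + 1 > 0"
    using assms by auto
  show ?thesis
    unfolding closed_form_eq_gamma_eta_difference[OF pos]
    using integral[unfolded V_def]
    by (rule has_integral_eq[rotated]) (simp only: L_def greaterThanLessThan_iff log_powr_integrand_split)
qed

end
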